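(* Let $n\ge 2$ and let $P$ be an $n\times n$ permutation matrix which is the leaf matrix of exactly one CNM of size $n$. Then for every $k$ with $2\le k\le n-1$, the $k$-th L-subset of $P$ contains exactly one entry equal to $1$.
   Context: A complete non-ambiguous matrix (CNM) of size $n$ is an $n\times n$ matrix $M=(m_{i,j})$ with entries in $\{0,1\}$ whose support $T=\{(i,j): m_{i,j}=1\}$ (whose elements are called vertices) satisfies: (1) $(1,1)\in T$; (2) for every $p=(i,j)\in T$ with $p\neq(1,1)$, exactly one of the following holds: there is $(i',j)\in T$ with $i'<i$, or there is $(i,j')\in T$ with $j'<j$; (3) every row and every column of $M$ contains at least one vertex; (4) define the parent of $p=(i,j)\neq(1,1)$ to be $(i',j)$ with $i'<i$ maximal if such a vertex exists, and otherwise $(i,j')$ with $j'<j$ maximal; then every vertex is the parent of either zero or exactly two vertices. A vertex with no children is a leaf. The leaf matrix $p(M)$ is obtained from $M$ by replacing all non-leaf vertices by $0$ (it is a permutation matrix). For an $n\times n$ matrix and $k>1$, the $k$-th L-subset is the set of positions $\{(i,j): (i=k \text{ and } j\le k) \text{ or } (j=k \text{ and } i\le k)\}$. *)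

theory Defs
  imports Main
begin

text \<open>An n x n 0/1 matrix is represented by its support: the set of positions
(i,j), 1 <= i,j <= n, whose entry is 1 (rows/columns indexed from 1).\<close>

definition is_01_matrix :: "nat \<Rightarrow> (nat \<times> nat) set \<Rightarrow> bool" where
  "is_01_matrix n T \<longleftrightarrow> T \<subseteq> {1..n} \<times> {1..n}"

definition has_above :: "(nat \<times> nat) set \<Rightarrow> nat \<times> nat \<Rightarrow> bool" where
  "has_above T p \<longleftrightarrow> (\<exists>i'. i' < fst p \<and> (i', snd p) \<in> T)"

definition has_left :: "(nat \<times> nat) set \<Rightarrow> nat \<times> nat \<Rightarrow> bool" where
  "has_left T p \<longleftrightarrow> (\<exists>j'. j' < snd p \<and> (fst p, j') \<in> T)"

definition parent :: "(nat \<times> nat) set \<Rightarrow> nat \<times> nat \<Rightarrow> nat \<times> nat" where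
  "parent T p =
     (if has_above T p
      then (GREATEST i'. i' < fst p \<and> (i', snd p) \<in> T, snd p)
      else (fst p, GREATEST j'. j' < snd p \<and> (fst p, j') \<in> T))"

definition children :: "(nat \<times> nat) set \<Rightarrow> nat \<times> nat \<Rightarrow> (nat \<times> nat) set" where
  "children T p = {q \<in> T. q \<noteq> (1,1) \<and> parent T q = p}"

definition is_CNM :: "nat \<Rightarrow> (nat \<times> nat) set \<Rightarrow> bool" where
  "is_CNM n T \<longleftrightarrow>
     is_01_matrix n T \<and>
     (1,1) \<in> T \<and>
     (\<forall>p\<in>T. p \<noteq> (1,1) \<longrightarrow> (has_above T p \<noteq> has_left T p)) \<and>
     (\<forall>i\<in>{1..n}. \<exists>j. (i,j) \<in> T) \<and>
     (\<forall>j\<in>{1..n}. \<exists>i. (i,j) \<in> T) \<and>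
     (\<forall>p\<in>T. card (children T p) = 0 \<or> card (children T p) = 2)"

definition leaf_matrix :: "(nat \<times> nat) set \<Rightarrow> (nat \<times> nat) set" where
  "leaf_matrix T = {p \<in> T. children T p = {}}"

definition is_perm_matrix :: "nat \<Rightarrow> (nat \<times> nat) set \<Rightarrow> bool" where
  "is_perm_matrix n P \<longleftrightarrow> is_01_matrix n P \<and>
     (\<forall>i\<in>{1..n}. \<exists>!j. (i,j) \<in> P) \<and> (\<forall>j\<in>{1..n}. \<exists>!i. (i,j) \<in> P)"

definition L_subset :: "nat \<Rightarrow> (nat \<times> nat) set" where
  "L_subset k = {(i,j). (i = k \<and> 1 \<le> j \<and> j \<le> k) \<or> (j = k \<and> 1 \<le> i \<and> i \<le> k)}"

end

theory Submission
  imports Defs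
begin

text \<open>
  In a CNM the children of a vertex are the next vertex to its right and the next vertex below it,
  and a vertex has the one iff it has the other; so the leaves are exactly the last vertices of the
  rows (equivalently, of the columns). Let k be least such that the k-th L-subset does not contain
  exactly one leaf. The (k-1)-square then holds k-2 leaves, so exactly one row i0 < k and one
  column j0 < k reach beyond it, and looking at row k+1 shows that the L-subset cannot hold two
  leaves; hence it holds none. In that situation a single vertex can be moved -- (i0,s) to (k,j0),
  where s is the first column of row k, or (k,j0) to (k,k), or the transposed moves -- so that the
  result is again a CNM with the same leaves, contradicting uniqueness.
\<close>

definition has_right :: "(nat \<times> nat) set \<Rightarrow> nat \<times> nat \<Rightarrow> bool" where
  "has_right T p \<longleftrightarrow> (\<exists>j. snd p < j \<and> (fst p, j) \<in> T)"

definition has_below :: "(nat \<times> nat) set \<Rightarrow> nat \<times> nat \<Rightarrow> bool" where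
  "has_below T p \<longleftrightarrow> (\<exists>i. fst p < i \<and> (i, snd p) \<in> T)"

definition exclusive_parent :: "(nat \<times> nat) set \<Rightarrow> bool" where
  "exclusive_parent T \<longleftrightarrow> (\<forall>p\<in>T. p \<noteq> (1,1) \<longrightarrow> has_above T p \<noteq> has_left T p)"

definition right_child :: "(nat \<times> nat) set \<Rightarrow> nat \<times> nat \<Rightarrow> (nat \<times> nat) set" where
  "right_child T p =
     {q \<in> T. fst q = fst p \<and> snd p < snd q \<and> (\<forall>j. snd p < j \<and> j < snd q \<longrightarrow> (fst p, j) \<notin> T)}"

definition below_child :: "(nat \<times> nat) set \<Rightarrow> nat \<times> nat \<Rightarrow> (nat \<times> nat) set" where
  "below_child T p =
     {q \<in> T. snd q = snd p \<and> fst p < fst q \<and> (\<forall>i. fst p < i \<and> i < fst q \<longrightarrow> (i, snd p) \<notin> T)}"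

lemma has_above_converse [simp]: "has_above (T\<inverse>) (a,b) \<longleftrightarrow> has_left T (b,a)"
  and has_left_converse [simp]: "has_left (T\<inverse>) (a,b) \<longleftrightarrow> has_above T (b,a)"
  and has_right_converse [simp]: "has_right (T\<inverse>) (a,b) \<longleftrightarrow> has_below T (b,a)"
  and has_below_converse [simp]: "has_below (T\<inverse>) (a,b) \<longleftrightarrow> has_right T (b,a)"
  by (simp_all add: has_above_def has_left_def has_right_def has_below_def)

lemma below_child_converse: "below_child T (a,b) = (right_child (T\<inverse>) (b,a))\<inverse>"
  by (auto simp: below_child_def right_child_def)

lemma Greatest_less_eq_iff:
  fixes a :: nat
  assumes "\<exists>i<a. Q i"
  shows "(GREATEST i. i < a \<and> Q i) = g \<longleftrightarrow> g < a \<and> Q g \<and> (\<forall>i. g < i \<and> i < a \<longrightarrow> \<not> Q i)"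
proof -
  let ?g = "GREATEST i. i < a \<and> Q i"
  have "?g < a \<and> Q ?g" and "\<And>i. i < a \<Longrightarrow> Q i \<Longrightarrow> i \<le> ?g"
    using assms GreatestI_nat[of "\<lambda>i. i < a \<and> Q i" _ a] Greatest_le_nat[of "\<lambda>i. i < a \<and> Q i" _ a]
    by auto
  then show ?thesis
    by (metis not_le antisym)
qed

lemma right_child_subset_singleton: "right_child T p \<subseteq> {(fst p, LEAST j. snd p < j \<and> (fst p, j) \<in> T)}"
proof
  fix q assume "q \<in> right_child T p"
  then show "q \<in> {(fst p, LEAST j. snd p < j \<and> (fst p, j) \<in> T)}"
    by (cases q) (auto simp: right_child_def not_le[symmetric] intro!: Least_equality[symmetric])
qed

lemma right_child_empty_iff: "right_child T p = {} \<longleftrightarrow> \<not> has_right T p"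
proof
  assume "right_child T p = {}"
  moreover have "(fst p, LEAST j. snd p < j \<and> (fst p, j) \<in> T) \<in> right_child T p" if "has_right T p"
    using that LeastI_ex[of "\<lambda>j. snd p < j \<and> (fst p, j) \<in> T"] not_less_Least
    by (fastforce simp: has_right_def right_child_def)
  ultimately show "\<not> has_right T p" by blast
qed (auto simp: right_child_def has_right_def)

lemma finite_right_child: "finite (right_child T p)"
  using right_child_subset_singleton by (rule finite_subset) simp

lemma card_right_child: "card (right_child T p) = (if has_right T p then 1 else 0)"
  using right_child_subset_singleton[of T p] right_child_empty_iff[of T p]
  by (auto simp: subset_singleton_iff)

lemma below_child_empty_iff: "below_child T p = {} \<longleftrightarrow> \<not> has_below T p"
  using right_child_empty_iff[of "T\<inverse>" "prod.swap p"]
  by (cases p) (simp add: below_child_converse converse_inject[of _ "{}", simplified])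

lemma finite_below_child: "finite (below_child T p)"
  using finite_right_child[of "T\<inverse>" "prod.swap p"] by (cases p) (simp add: below_child_converse)

lemma card_below_child: "card (below_child T p) = (if has_below T p then 1 else 0)"
  using card_right_child[of "T\<inverse>" "prod.swap p"] by (cases p) (simp add: below_child_converse)

lemma children_subset:
  assumes excl: "exclusive_parent T"
  shows "children T p \<subseteq> right_child T p \<union> below_child T p"
proof
  fix q assume "q \<in> children T p"
  then have q: "q \<in> T" "q \<noteq> (1,1)" "parent T q = p" by (auto simp: children_def)
  show "q \<in> right_child T p \<union> below_child T p"
  proof (cases "has_above T q")
    case True
    then have "(GREATEST i. i < fst q \<and> (i, snd q) \<in> T) = fst p" "snd p = snd q"
      using q(3) by (auto simp: parent_def)
    then have "q \<in> below_child T p"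
      using Greatest_less_eq_iff[of "fst q" "\<lambda>i. (i, snd q) \<in> T"] True q(1)
      by (auto simp: below_child_def has_above_def)
    then show ?thesis by simp
  next
    case False
    then have "has_left T q" using excl q by (auto simp: exclusive_parent_def)
    moreover have "(GREATEST j. j < snd q \<and> (fst q, j) \<in> T) = snd p" "fst p = fst q"
      using q(3) False by (auto simp: parent_def)
    ultimately have "q \<in> right_child T p"
      using Greatest_less_eq_iff[of "snd q" "\<lambda>j. (fst q, j) \<in> T"] q(1)
      by (auto simp: right_child_def has_left_def)
    then show ?thesis by simp
  qed
qed

lemma right_child_subset_children:
  assumes excl: "exclusive_parent T" and p: "p \<in> T" "1 \<le> snd p"
  shows "right_child T p \<subseteq> children T p"
proof
  fix q assume "q \<in> right_child T p"
  then have q: "q \<in> T" "fst q = fst p" "snd p < snd q" "\<forall>j. snd p < j \<and> j < snd q \<longrightarrow> (fst p, j) \<notin> T"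
    by (auto simp: right_child_def)
  have "q \<noteq> (1,1)" using q(3) p(2) by auto
  moreover have "has_left T q" using p(1) q(2,3) by (auto simp: has_left_def)
  ultimately have "\<not> has_above T q" using excl q(1) by (auto simp: exclusive_parent_def)
  then have "parent T q = p"
    using q p(1) Greatest_less_eq_iff[of "snd q" "\<lambda>j. (fst q, j) \<in> T"]
    by (cases p) (auto simp: parent_def)
  then show "q \<in> children T p" using q(1) \<open>q \<noteq> (1,1)\<close> by (simp add: children_def)
qed

lemma below_child_subset_children:
  assumes p: "p \<in> T" "1 \<le> fst p"
  shows "below_child T p \<subseteq> children T p"
proof
  fix q assume "q \<in> below_child T p"
  then have q: "q \<in> T" "snd q = snd p" "fst p < fst q" "\<forall>i. fst p < i \<and> i < fst q \<longrightarrow> (i, snd p) \<notin> T"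
    by (auto simp: below_child_def)
  have "q \<noteq> (1,1)" using q(3) p(2) by auto
  moreover have "has_above T q" using p(1) q(2,3) by (auto simp: has_above_def)
  ultimately have "parent T q = p"
    using q p(1) Greatest_less_eq_iff[of "fst q" "\<lambda>i. (i, snd q) \<in> T"]
    by (cases p) (auto simp: parent_def)
  then show "q \<in> children T p" using q(1) \<open>q \<noteq> (1,1)\<close> by (simp add: children_def)
qed

lemma children_eq:
  assumes "exclusive_parent T" "p \<in> T" "1 \<le> fst p" "1 \<le> snd p"
  shows "children T p = right_child T p \<union> below_child T p"
  using children_subset right_child_subset_children below_child_subset_children assms
  by (metis subset_antisym Un_least)

lemma card_children:
  assumes "exclusive_parent T" "p \<in> T" "1 \<le> fst p" "1 \<le> snd p"
  shows "card (children T p) = (if has_right T p then 1 else 0) + (if has_below T p then 1 else 0)"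
proof -
  have "right_child T p \<inter> below_child T p = {}"
    by (auto simp: right_child_def below_child_def)
  then show ?thesis
    by (simp add: children_eq[OF assms] card_Un_disjoint finite_right_child finite_below_child
        card_right_child card_below_child)
qed

lemma is_CNM_iff:
  "is_CNM n T \<longleftrightarrow> is_01_matrix n T \<and> (1,1) \<in> T \<and> exclusive_parent T \<and>
     (\<forall>i\<in>{1..n}. \<exists>j. (i,j) \<in> T) \<and> (\<forall>j\<in>{1..n}. \<exists>i. (i,j) \<in> T) \<and>
     (\<forall>p\<in>T. has_right T p \<longleftrightarrow> has_below T p)"
proof -
  have "card (children T p) = 0 \<or> card (children T p) = 2 \<longleftrightarrow> (has_right T p \<longleftrightarrow> has_below T p)"
    if "is_01_matrix n T" "exclusive_parent T" "p \<in> T" for p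
  proof -
    have "1 \<le> fst p" "1 \<le> snd p" using that by (auto simp: is_01_matrix_def)
    then show ?thesis using that card_children[of T p] by auto
  qed
  then show ?thesis
    unfolding is_CNM_def exclusive_parent_def[symmetric] by (intro iffI; elim conjE; intro conjI) auto
qed

lemma leaf_matrix_eq:
  assumes "is_CNM n T"
  shows "leaf_matrix T = {p \<in> T. \<not> has_right T p}"
proof -
  have "children T p = {} \<longleftrightarrow> \<not> has_right T p" if "p \<in> T" for p
  proof -
    have "1 \<le> fst p" "1 \<le> snd p" "exclusive_parent T" "has_right T p \<longleftrightarrow> has_below T p"
      using assms that by (auto simp: is_CNM_iff is_01_matrix_def)
    then show ?thesis
      using that children_eq[of T p] right_child_empty_iff[of T p] below_child_empty_iff[of T p]
      by auto
  qed
  then show ?thesis by (auto simp: leaf_matrix_def)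
qed

lemma has_right_insert_remove:
  assumes "has_right T x" and "has_right (T - {x}) y"
  shows "has_right (insert y (T - {x})) p \<longleftrightarrow> has_right T p"
proof
  assume "has_right (insert y (T - {x})) p"
  then obtain j where j: "snd p < j" "(fst p, j) \<in> insert y (T - {x})" by (auto simp: has_right_def)
  show "has_right T p"
  proof (cases "(fst p, j) = y")
    case True
    then obtain j' where "j < j'" "(fst p, j') \<in> T" using assms(2) by (auto simp: has_right_def)
    then show ?thesis using j unfolding has_right_def by (blast intro: less_trans)
  qed (use j in \<open>auto simp: has_right_def\<close>)
next
  assume "has_right T p"
  then obtain j where j: "snd p < j" "(fst p, j) \<in> T" by (auto simp: has_right_def)
  show "has_right (insert y (T - {x})) p"
  proof (cases "(fst p, j) = x")
    case True
    then obtain j' where "j < j'" "(fst p, j') \<in> T" using assms(1) by (auto simp: has_right_def)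
    then show ?thesis using j True unfolding has_right_def by (blast intro: less_trans)
  qed (use j in \<open>auto simp: has_right_def\<close>)
qed

lemma has_below_insert_remove:
  assumes "has_below T x" and "has_below (T - {x}) y"
  shows "has_below (insert y (T - {x})) p \<longleftrightarrow> has_below T p"
proof -
  obtain a b c d e f where [simp]: "x = (a,b)" "y = (c,d)" "p = (e,f)" by (cases x, cases y, cases p)
  have "insert (d,c) (T\<inverse> - {(b,a)}) = (insert y (T - {x}))\<inverse>" "T\<inverse> - {(b,a)} = (T - {x})\<inverse>"
    by auto
  then show ?thesis
    using has_right_insert_remove[of "T\<inverse>" "(b,a)" "(d,c)" "(f,e)"] assms by simp
qed

lemma insert_remove_neq: "x \<in> T \<Longrightarrow> y \<noteq> x \<Longrightarrow> insert y (T - {x}) \<noteq> T"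
  by (metis Diff_iff insert_iff singletonI)

lemma has_above_insert_remove_iff:
  "has_above (insert y (T - {x})) (a,b) \<longleftrightarrow> (\<exists>i<a. (i,b) \<in> T \<and> (i,b) \<noteq> x) \<or> (snd y = b \<and> fst y < a)"
  by (cases y) (auto simp: has_above_def)

lemma has_left_insert_remove_iff:
  "has_left (insert y (T - {x})) (a,b) \<longleftrightarrow> (\<exists>j<b. (a,j) \<in> T \<and> (a,j) \<noteq> x) \<or> (fst y = a \<and> snd y < b)"
  by (cases y) (auto simp: has_left_def)

definition square :: "nat \<Rightarrow> (nat \<times> nat) set" where
  "square m = {1..m} \<times> {1..m}"

lemma card_Int_square_Suc:
  assumes "finite A"
  shows "card (A \<inter> square (Suc m)) = card (A \<inter> square m) + card (A \<inter> L_subset (Suc m))"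
proof -
  have "A \<inter> square (Suc m) = (A \<inter> square m) \<union> (A \<inter> L_subset (Suc m))"
    by (auto simp: square_def L_subset_def)
  moreover have "(A \<inter> square m) \<inter> (A \<inter> L_subset (Suc m)) = {}"
    by (auto simp: square_def L_subset_def)
  ultimately show ?thesis using assms by (simp add: card_Un_disjoint)
qed

locale CNM_leaves =
  fixes n :: nat and T P :: "(nat \<times> nat) set"
  assumes CNM: "is_CNM n T" and leaf_matrix: "leaf_matrix T = P" and perm: "is_perm_matrix n P"
begin

lemma in_grid: "(i,j) \<in> T \<Longrightarrow> 1 \<le> i \<and> i \<le> n \<and> 1 \<le> j \<and> j \<le> n"
  using CNM by (auto simp: is_CNM_iff is_01_matrix_def)

lemma root_in: "(1,1) \<in> T"
  using CNM by (simp add: is_CNM_iff)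

lemma exclusive: "exclusive_parent T"
  using CNM by (simp add: is_CNM_iff)

lemma has_above_neq_has_left: "p \<in> T \<Longrightarrow> p \<noteq> (1,1) \<Longrightarrow> has_above T p \<noteq> has_left T p"
  using exclusive by (simp add: exclusive_parent_def)

lemma has_right_iff_has_below: "p \<in> T \<Longrightarrow> has_right T p \<longleftrightarrow> has_below T p"
  using CNM by (simp add: is_CNM_iff)

lemma row_nonempty: "1 \<le> i \<Longrightarrow> i \<le> n \<Longrightarrow> \<exists>j. (i,j) \<in> T"
  and col_nonempty: "1 \<le> j \<Longrightarrow> j \<le> n \<Longrightarrow> \<exists>i. (i,j) \<in> T"
  using CNM by (auto simp: is_CNM_iff)

lemma leaf_iff: "p \<in> P \<longleftrightarrow> p \<in> T \<and> \<not> has_right T p"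
  using leaf_matrix leaf_matrix_eq[OF CNM] by auto

lemma leaf_in_row: "1 \<le> i \<Longrightarrow> i \<le> n \<Longrightarrow> \<exists>j. (i,j) \<in> P"
  and leaf_in_col: "1 \<le> j \<Longrightarrow> j \<le> n \<Longrightarrow> \<exists>i. (i,j) \<in> P"
  using perm unfolding is_perm_matrix_def by auto

lemma leaf_in_grid: "(i,j) \<in> P \<Longrightarrow> 1 \<le> i \<and> i \<le> n \<and> 1 \<le> j \<and> j \<le> n"
  using perm by (auto simp: is_perm_matrix_def is_01_matrix_def)

lemma leaf_row_unique: "(i,j) \<in> P \<Longrightarrow> (i,j') \<in> P \<Longrightarrow> j = j'"
  and leaf_col_unique: "(i,j) \<in> P \<Longrightarrow> (i',j) \<in> P \<Longrightarrow> i = i'"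
  using perm unfolding is_perm_matrix_def is_01_matrix_def by blast+

lemma converse: "CNM_leaves n (T\<inverse>) (P\<inverse>)"
proof
  have "exclusive_parent (T\<inverse>)"
    using exclusive by (auto simp: exclusive_parent_def)
  then show "is_CNM n (T\<inverse>)"
    using CNM has_right_iff_has_below by (auto simp: is_CNM_iff is_01_matrix_def)
  show "leaf_matrix (T\<inverse>) = P\<inverse>"
    using has_right_iff_has_below by (auto simp: leaf_matrix_eq[OF \<open>is_CNM n (T\<inverse>)\<close>] leaf_iff)
  show "is_perm_matrix n (P\<inverse>)"
    using perm by (auto simp: is_perm_matrix_def is_01_matrix_def)
qed

lemma finite_leaves: "finite P"
proof (rule finite_subset)
  show "P \<subseteq> {1..n} \<times> {1..n}" using perm by (simp add: is_perm_matrix_def is_01_matrix_def)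
qed simp

lemma le_leaf_col:
  assumes "(i,j) \<in> T" and "(i,j') \<in> P"
  shows "j \<le> j'"
proof -
  let ?row = "{j. (i,j) \<in> T}"
  have "?row \<subseteq> {1..n}" using in_grid[of i] by auto
  then have fin: "finite ?row" by (rule finite_subset) simp
  have ne: "j \<in> ?row" using assms(1) by simp
  have "(i, Max ?row) \<in> T" using Max_in[OF fin] ne by blast
  moreover have "\<not> has_right T (i, Max ?row)"
  proof
    assume "has_right T (i, Max ?row)"
    then obtain j'' where "Max ?row < j''" "(i,j'') \<in> T" by (auto simp: has_right_def)
    then show False using Max_ge[OF fin, of j''] by simp
  qed
  ultimately have "(i, Max ?row) \<in> P" by (simp add: leaf_iff)
  then have "Max ?row = j'" using leaf_row_unique[OF _ assms(2)] by simp
  then show ?thesis using Max_ge[OF fin ne] by simp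
qed

lemma le_leaf_row: "(i,j) \<in> T \<Longrightarrow> (i',j) \<in> P \<Longrightarrow> i \<le> i'"
  using CNM_leaves.le_leaf_col[OF converse, of j i i'] by simp

lemma has_above_if_first_in_row:
  assumes "(a,b) \<in> T" "(a,b) \<noteq> (1,1)" "\<And>j. j < b \<Longrightarrow> (a,j) \<notin> T"
  shows "\<exists>i<a. (i,b) \<in> T"
proof -
  have "\<not> has_left T (a,b)" using assms(3) by (simp add: has_left_def)
  then show ?thesis using has_above_neq_has_left[OF assms(1,2)] by (simp add: has_above_def)
qed

lemma has_left_if_first_in_col:
  assumes "(a,b) \<in> T" "(a,b) \<noteq> (1,1)" "\<And>i. i < a \<Longrightarrow> (i,b) \<notin> T"
  shows "\<exists>j<b. (a,j) \<in> T"
proof -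
  have "\<not> has_above T (a,b)" using assms(3) by (simp add: has_above_def)
  then show ?thesis using has_above_neq_has_left[OF assms(1,2)] by (simp add: has_left_def)
qed

lemma root_not_leaf:
  assumes "2 \<le> n"
  shows "(1,1) \<notin> P"
proof
  assume root: "(1,1) \<in> P"
  have "\<exists>j. (2,j) \<in> T" using row_nonempty[of 2] assms by auto
  then obtain c where c: "(2,c) \<in> T" "\<And>j. j < c \<Longrightarrow> (2,j) \<notin> T"
    by (auto simp: exists_least_iff[of "\<lambda>j. (2,j) \<in> T"])
  then obtain i where "i < 2" "(i,c) \<in> T" using has_above_if_first_in_row[of 2 c] by auto
  then have "(1,c) \<in> T" using in_grid[of i c] by (cases i) auto
  then have "c = 1" using le_leaf_col[OF _ root] c(1) in_grid by fastforce
  then show False using le_leaf_row[OF _ root] c(1) by fastforce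
qed

lemma exchange:
  assumes x: "x \<in> T" "x \<noteq> (1,1)" "has_right T x"
    and y: "1 \<le> fst y" "fst y \<le> n" "1 \<le> snd y" "snd y \<le> n"
    and y_right: "has_right (T - {x}) y" and y_below: "has_below (T - {x}) y"
    and excl: "exclusive_parent (insert y (T - {x}))"
  shows "CNM_leaves n (insert y (T - {x})) P"
proof
  let ?T' = "insert y (T - {x})"
  have x_below: "has_below T x" using x has_right_iff_has_below by blast
  have right: "has_right ?T' p \<longleftrightarrow> has_right T p" for p
    using has_right_insert_remove[OF x(3) y_right] .
  have below: "has_below ?T' p \<longleftrightarrow> has_below T p" for p
    using has_below_insert_remove[OF x_below y_below] .
  have y_right_T: "has_right T y" and y_below_T: "has_below T y"
    using y_right y_below by (auto simp: has_right_def has_below_def)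
  have rows: "\<exists>j. (i,j) \<in> ?T'" if i: "1 \<le> i" "i \<le> n" for i
  proof -
    obtain j where "(i,j) \<in> T" using row_nonempty[OF i] by blast
    moreover obtain j' where "(fst x, j') \<in> T" "(fst x, j') \<noteq> x"
      using x(3) by (cases x) (auto simp: has_right_def)
    ultimately show ?thesis by (cases "(i,j) = x") auto
  qed
  have cols: "\<exists>i. (i,j) \<in> ?T'" if j: "1 \<le> j" "j \<le> n" for j
  proof -
    obtain i where "(i,j) \<in> T" using col_nonempty[OF j] by blast
    moreover obtain i' where "(i', snd x) \<in> T" "(i', snd x) \<noteq> x"
      using x_below by (cases x) (auto simp: has_below_def)
    ultimately show ?thesis by (cases "(i,j) = x") auto
  qed
  have binary: "has_right ?T' p \<longleftrightarrow> has_below ?T' p" if "p \<in> ?T'" for p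
    using that y_right_T y_below_T has_right_iff_has_below[of p] by (auto simp: right below)
  have "is_01_matrix n ?T'"
    using in_grid y by (cases y) (auto simp: is_01_matrix_def)
  then show CNM': "is_CNM n ?T'"
    using root_in excl x(2) rows cols binary by (simp add: is_CNM_iff)
  have "leaf_matrix ?T' = {p \<in> ?T'. \<not> has_right T p}"
    by (simp add: leaf_matrix_eq[OF CNM'] right)
  also have "\<dots> = {p \<in> T. \<not> has_right T p}"
    using y_right_T x(3) by blast
  finally show "leaf_matrix ?T' = P"
    using leaf_iff by blast
  show "is_perm_matrix n P" by (rule perm)
qed

lemma card_leaves_in_square:
  assumes "2 \<le> n" and "1 \<le> m" and L: "\<And>l. 2 \<le> l \<Longrightarrow> l \<le> m \<Longrightarrow> card (P \<inter> L_subset l) = 1"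
  shows "card (P \<inter> square m) = m - 1"
  using assms(2) L
proof (induction m rule: nat_induct_at_least)
  case base
  have "P \<inter> square 1 = {}" using root_not_leaf[OF assms(1)] by (auto simp: square_def)
  then show ?case by simp
next
  case (Suc m)
  then show ?case by (simp add: card_Int_square_Suc[OF finite_leaves])
qed

lemma row_escaping_square:
  assumes "2 \<le> k" and card: "card (P \<inter> square (k-1)) = k - 2"
  obtains i0 where "1 \<le> i0" "i0 < k" "\<And>j. (i0,j) \<in> P \<Longrightarrow> k \<le> j"
    "\<And>i j. (i,j) \<in> T \<Longrightarrow> i < k \<Longrightarrow> i \<noteq> i0 \<Longrightarrow> j < k"
proof -
  let ?R = "fst ` (P \<inter> square (k-1))"
  have "inj_on fst (P \<inter> square (k-1))"
    by (rule inj_onI) (metis IntD1 leaf_row_unique prod.collapse)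
  then have "card ?R = k - 2" using card card_image by metis
  moreover have R: "?R \<subseteq> {1..k-1}" by (auto simp: square_def)
  ultimately have "card ({1..k-1} - ?R) = 1"
    using card_Diff_subset[OF finite_subset[OF R] R] assms(1) by simp
  then obtain i0 where i0: "{1..k-1} - ?R = {i0}" by (rule card_1_singletonE)
  show ?thesis
  proof
    have "i0 \<in> {1..k-1}" using i0 by blast
    then show "1 \<le> i0" "i0 < k" using assms(1) by auto
    show "k \<le> j" if "(i0,j) \<in> P" for j
    proof (rule ccontr)
      assume "\<not> k \<le> j"
      moreover have "1 \<le> j" using that in_grid leaf_iff by blast
      ultimately have "i0 \<in> ?R" using that \<open>1 \<le> i0\<close> \<open>i0 < k\<close>
        by (force simp: square_def)
      then show False using i0 by blast
    qed
    show "j < k" if ij: "(i,j) \<in> T" "i < k" "i \<noteq> i0" for i j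
    proof -
      have "i \<in> ?R" using ij i0 in_grid[of i j] by auto
      then obtain j' where "(i,j') \<in> P" "j' \<le> k - 1" by (force simp: square_def)
      then show ?thesis using le_leaf_col[OF ij(1)] assms(1) by fastforce
    qed
  qed
qed

lemma leaves_Int_L_subset:
  assumes "(k,jk) \<in> P" and "(ik,k) \<in> P"
  shows "P \<inter> L_subset k = (if jk \<le> k then {(k,jk)} else {}) \<union> (if ik \<le> k then {(ik,k)} else {})"
proof -
  have "P \<inter> L_subset k = {(k,j) |j. (k,j) \<in> P \<and> j \<le> k} \<union> {(i,k) |i. (i,k) \<in> P \<and> i \<le> k}"
    by (auto simp: L_subset_def dest: leaf_in_grid)
  also have "{(k,j) |j. (k,j) \<in> P \<and> j \<le> k} = (if jk \<le> k then {(k,jk)} else {})"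
    using assms(1) by (auto dest: leaf_row_unique[OF assms(1)])
  also have "{(i,k) |i. (i,k) \<in> P \<and> i \<le> k} = (if ik \<le> k then {(ik,k)} else {})"
    using assms(2) by (auto dest: leaf_col_unique[OF assms(2)])
  finally show ?thesis .
qed

lemma no_two_leaves_in_L_subset:
  assumes k: "k < n" and i0: "i0 < k" and j0: "j0 < k"
    and rows_confined: "\<And>i j. (i,j) \<in> T \<Longrightarrow> i < k \<Longrightarrow> i \<noteq> i0 \<Longrightarrow> j < k"
    and cols_confined: "\<And>i j. (i,j) \<in> T \<Longrightarrow> j < k \<Longrightarrow> j \<noteq> j0 \<Longrightarrow> i < k"
    and "(k,jk) \<in> P" "jk < k" and "(ik,k) \<in> P" "ik < k"
  shows False
proof -
  have "(k,jk) \<in> T" "(ik,k) \<in> T" using assms(6,8) leaf_iff by blast+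
  then have "jk = j0" "ik = i0" using cols_confined[of k jk] rows_confined[of ik k] assms(7,9) by auto
  then have row_k: "(k,j0) \<in> P" and col_k: "(i0,k) \<in> P" using assms(6,8) by simp_all
  \<comment> \<open>The first vertex of row k+1 needs a vertex above it, but columns j0 and k end at the
    leaves (k,j0) and (i0,k), and the other columns before k end above row k.\<close>
  have "\<exists>j. (Suc k, j) \<in> T" using row_nonempty[of "Suc k"] k by auto
  then obtain c where c: "(Suc k, c) \<in> T" "\<And>j. j < c \<Longrightarrow> (Suc k, j) \<notin> T"
    by (auto simp: exists_least_iff[of "\<lambda>j. (Suc k, j) \<in> T"])
  then obtain i where i: "i < Suc k" "(i,c) \<in> T" using has_above_if_first_in_row[OF c(1)] i0 by auto
  have "c \<le> k"
  proof (cases "i = k \<or> i = i0")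
    case True
    then show ?thesis using le_leaf_col[OF i(2)] row_k col_k j0 by fastforce
  next
    case False
    then show ?thesis using rows_confined[OF i(2)] i(1) by simp
  qed
  then consider "c = k" | "c = j0" | "c < k" "c \<noteq> j0" by linarith
  then show False
  proof cases
    case 1
    then show False using le_leaf_row[OF c(1)] col_k i0 by fastforce
  next
    case 2
    then show False using le_leaf_row[OF c(1)] row_k by fastforce
  next
    case 3
    then show False using cols_confined[OF c(1)] by simp
  qed
qed

lemma leaves_of_row_and_col_k_beyond_k:
  assumes "k < n" and fail: "card (P \<inter> L_subset k) \<noteq> 1" and "i0 < k" and "j0 < k"
    and "\<And>i j. (i,j) \<in> T \<Longrightarrow> i < k \<Longrightarrow> i \<noteq> i0 \<Longrightarrow> j < k"
    and "\<And>i j. (i,j) \<in> T \<Longrightarrow> j < k \<Longrightarrow> j \<noteq> j0 \<Longrightarrow> i < k"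
    and jk: "(k,jk) \<in> P" and ik: "(ik,k) \<in> P"
  shows "k < jk \<and> k < ik"
proof -
  have "\<not> (jk < k \<and> ik < k)"
  proof
    assume "jk < k \<and> ik < k"
    then show False
      by (intro no_two_leaves_in_L_subset[of k i0 j0 jk ik]) (use assms in auto)
  qed
  moreover have "jk \<noteq> k"
  proof
    assume "jk = k"
    then have "ik = k" using leaf_col_unique[OF ik] jk by simp
    then show False using fail leaves_Int_L_subset[OF jk ik] \<open>jk = k\<close> by simp
  qed
  moreover have "ik \<noteq> k"
  proof
    assume "ik = k"
    then have "jk = k" using leaf_row_unique[OF jk] ik by simp
    then show False using fail leaves_Int_L_subset[OF jk ik] \<open>ik = k\<close> by simp
  qed
  ultimately show ?thesis
    using leaves_Int_L_subset[OF jk ik] fail by (cases "jk < k"; cases "ik < k") auto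
qed

end

text \<open>The situation at a minimal k whose L-subset contains no leaf.\<close>

locale leafless_L_subset = CNM_leaves +
  fixes k i0 j0 :: nat
  assumes k: "2 \<le> k" "k \<le> n"
    and i0: "1 \<le> i0" "i0 < k" and j0: "1 \<le> j0" "j0 < k"
    and rows_confined: "\<And>i j. (i,j) \<in> T \<Longrightarrow> i < k \<Longrightarrow> i \<noteq> i0 \<Longrightarrow> j < k"
    and cols_confined: "\<And>i j. (i,j) \<in> T \<Longrightarrow> j < k \<Longrightarrow> j \<noteq> j0 \<Longrightarrow> i < k"
    and row_k_leaf: "\<And>j. (k,j) \<in> P \<Longrightarrow> k < j"
    and col_k_leaf: "\<And>i. (i,k) \<in> P \<Longrightarrow> k < i"
    and row_i0_leaf: "\<And>j. (i0,j) \<in> P \<Longrightarrow> k < j"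
    and col_j0_leaf: "\<And>i. (i,j0) \<in> P \<Longrightarrow> k < i"
begin

lemma converse: "leafless_L_subset n (T\<inverse>) (P\<inverse>) k j0 i0"
proof -
  interpret t: CNM_leaves n "T\<inverse>" "P\<inverse>" by (rule converse)
  show ?thesis
    by unfold_locales
      (use k i0 j0 rows_confined cols_confined row_k_leaf col_k_leaf row_i0_leaf col_j0_leaf in auto)
qed

lemma leaf_beyond_k_in_col_j0: "\<exists>i>k. (i,j0) \<in> T"
  using leaf_in_col[of j0] j0 k col_j0_leaf leaf_iff by fastforce

lemma leaf_beyond_k_in_row_k: "\<exists>j>k. (k,j) \<in> T"
  using leaf_in_row[of k] k row_k_leaf leaf_iff by fastforce

lemma col_j0_above_k: "\<exists>i<k. (i,j0) \<in> T"
proof -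
  have "\<exists>i. (i,j0) \<in> T" using leaf_beyond_k_in_col_j0 by blast
  then obtain t where t: "(t,j0) \<in> T" "\<And>i. i < t \<Longrightarrow> (i,j0) \<notin> T"
    by (auto simp: exists_least_iff[of "\<lambda>i. (i,j0) \<in> T"])
  show ?thesis
  proof (cases "(t,j0) = (1,1)")
    case True
    then show ?thesis using t(1) k by (intro exI[of _ t]) auto
  next
    case False
    then obtain j where "j < j0" "(t,j) \<in> T" using has_left_if_first_in_col[OF t(1)] t(2) by blast
    then have "t < k" using cols_confined j0 by fastforce
    then show ?thesis using t(1) by blast
  qed
qed

lemma row_i0_left_of_k: "\<exists>j<k. (i0,j) \<in> T"
  using leafless_L_subset.col_j0_above_k[OF converse] by simp

lemma leaf_beyond_k_in_col_k: "\<exists>i>k. (i,k) \<in> T"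
  using leafless_L_subset.leaf_beyond_k_in_row_k[OF converse] by simp

context
  fixes s :: nat
  assumes s: "(k,s) \<in> T" "k \<le> s" and s_first: "\<And>j. j < s \<Longrightarrow> (k,j) \<notin> T"
begin

lemma above_k_in_col_s: "(a,s) \<in> T \<Longrightarrow> a < k \<Longrightarrow> a = i0"
  using rows_confined s(2) by fastforce

lemma above_first_of_row_k: "(i0,s) \<in> T"
proof -
  obtain i where "i < k" "(i,s) \<in> T"
    using has_above_if_first_in_row[OF s(1)] s_first k by fastforce
  then show ?thesis using above_k_in_col_s by blast
qed

lemma has_above_shift_into_row_k:
  assumes p: "(a,b) \<in> T" "(a,b) \<noteq> (i0,s)" "(a,b) \<noteq> (k,s)"
  shows "has_above (insert (k,j0) (T - {(i0,s)})) (a,b) \<longleftrightarrow> has_above T (a,b)"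
proof
  assume "has_above (insert (k,j0) (T - {(i0,s)})) (a,b)"
  then consider i where "i < a" "(i,b) \<in> T" | "b = j0" "k < a"
    by (auto simp: has_above_insert_remove_iff)
  then show "has_above T (a,b)"
  proof cases
    case 2
    obtain r where "r < k" "(r,j0) \<in> T" using col_j0_above_k by blast
    then show ?thesis using 2 by (auto simp: has_above_def intro!: exI[of _ r])
  qed (auto simp: has_above_def)
next
  assume "has_above T (a,b)"
  then obtain i where i: "i < a" "(i,b) \<in> T" by (auto simp: has_above_def)
  show "has_above (insert (k,j0) (T - {(i0,s)})) (a,b)"
  proof (cases "(i,b) = (i0,s)")
    case True
    then have "k < a" using p above_k_in_col_s[of a] i by fastforce
    then show ?thesis using True s i0 by (auto simp: has_above_insert_remove_iff intro!: exI[of _ k])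
  qed (use i in \<open>auto simp: has_above_insert_remove_iff\<close>)
qed

lemma has_left_shift_into_row_k:
  assumes p: "(a,b) \<in> T" "(a,b) \<noteq> (k,s)"
  shows "has_left (insert (k,j0) (T - {(i0,s)})) (a,b) \<longleftrightarrow> has_left T (a,b)"
proof
  assume "has_left (insert (k,j0) (T - {(i0,s)})) (a,b)"
  then consider j where "j < b" "(a,j) \<in> T" | "a = k" "j0 < b"
    by (auto simp: has_left_insert_remove_iff)
  then show "has_left T (a,b)"
  proof cases
    case 2
    then have "s < b" using p s_first[of b] by fastforce
    then show ?thesis using 2 s by (auto simp: has_left_def)
  qed (auto simp: has_left_def)
next
  assume "has_left T (a,b)"
  then obtain j where j: "j < b" "(a,j) \<in> T" by (auto simp: has_left_def)
  show "has_left (insert (k,j0) (T - {(i0,s)})) (a,b)"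
  proof (cases "(a,j) = (i0,s)")
    case True
    obtain c where "c < k" "(i0,c) \<in> T" using row_i0_left_of_k by blast
    then show ?thesis using True j s by (auto simp: has_left_insert_remove_iff intro!: exI[of _ c])
  qed (use j in \<open>auto simp: has_left_insert_remove_iff\<close>)
qed

lemma exclusive_parent_shift_into_row_k: "exclusive_parent (insert (k,j0) (T - {(i0,s)}))"
  unfolding exclusive_parent_def
proof (intro ballI impI)
  fix p assume p: "p \<in> insert (k,j0) (T - {(i0,s)})" "p \<noteq> (1,1)"
  obtain a b where [simp]: "p = (a,b)" by (cases p)
  consider "p = (k,j0)" | "p = (k,s)" | "p \<in> T" "p \<noteq> (i0,s)" "p \<noteq> (k,s)" using p(1) by auto
  then show "has_above (insert (k,j0) (T - {(i0,s)})) p \<noteq> has_left (insert (k,j0) (T - {(i0,s)})) p"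
  proof cases
    case 1
    obtain r where "r < k" "(r,j0) \<in> T" using col_j0_above_k by blast
    then show ?thesis using 1 s s_first j0 i0
      by (auto simp: has_above_insert_remove_iff has_left_insert_remove_iff)
  next
    case 2
    then show ?thesis using above_k_in_col_s s s_first j0 i0
      by (auto simp: has_above_insert_remove_iff has_left_insert_remove_iff)
  next
    case 3
    then show ?thesis
      using has_above_shift_into_row_k has_left_shift_into_row_k has_above_neq_has_left p(2) by simp
  qed
qed

lemma CNM_leaves_shift_into_row_k: "CNM_leaves n (insert (k,j0) (T - {(i0,s)})) P"
proof -
  have "has_right T (i0,s)"
    using has_right_iff_has_below[OF above_first_of_row_k] s i0 by (auto simp: has_below_def)
  moreover have "has_right (T - {(i0,s)}) (k,j0)" "has_below (T - {(i0,s)}) (k,j0)"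
    using s i0 j0 leaf_beyond_k_in_col_j0
    by (auto simp: has_right_def has_below_def intro!: exI[of _ s])
  ultimately show ?thesis
    using exchange[OF above_first_of_row_k] exclusive_parent_shift_into_row_k k j0 s by auto
qed

end

context
  assumes row_k_early: "(k,j0) \<in> T" and col_k_early: "(i0,k) \<in> T"
begin

lemma row_k_left_of_k: "(k,j) \<in> T \<Longrightarrow> j < k \<Longrightarrow> j = j0"
  using cols_confined by fastforce

lemma has_above_shift_onto_diagonal:
  assumes p: "(a,b) \<in> T"
  shows "has_above (insert (k,k) (T - {(k,j0)})) (a,b) \<longleftrightarrow> has_above T (a,b)"
proof
  assume "has_above (insert (k,k) (T - {(k,j0)})) (a,b)"
  then consider i where "i < a" "(i,b) \<in> T" | "b = k" "k < a"
    by (auto simp: has_above_insert_remove_iff)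
  then show "has_above T (a,b)"
  proof cases
    case 2
    then show ?thesis using col_k_early i0 by (auto simp: has_above_def intro!: exI[of _ i0])
  qed (auto simp: has_above_def)
next
  assume "has_above T (a,b)"
  then obtain i where i: "i < a" "(i,b) \<in> T" by (auto simp: has_above_def)
  show "has_above (insert (k,k) (T - {(k,j0)})) (a,b)"
  proof (cases "(i,b) = (k,j0)")
    case True
    obtain r where "r < k" "(r,j0) \<in> T" using col_j0_above_k by blast
    then show ?thesis using True i j0 by (auto simp: has_above_insert_remove_iff intro!: exI[of _ r])
  qed (use i in \<open>auto simp: has_above_insert_remove_iff\<close>)
qed

lemma has_left_shift_onto_diagonal:
  assumes p: "(a,b) \<in> T" "(a,b) \<noteq> (k,j0)" "(a,b) \<noteq> (k,k)"
  shows "has_left (insert (k,k) (T - {(k,j0)})) (a,b) \<longleftrightarrow> has_left T (a,b)"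
proof
  assume "has_left (insert (k,k) (T - {(k,j0)})) (a,b)"
  then consider j where "j < b" "(a,j) \<in> T" | "a = k" "k < b"
    by (auto simp: has_left_insert_remove_iff)
  then show "has_left T (a,b)"
  proof cases
    case 2
    then show ?thesis using row_k_early j0 by (auto simp: has_left_def intro!: exI[of _ j0])
  qed (auto simp: has_left_def)
next
  assume "has_left T (a,b)"
  then obtain j where j: "j < b" "(a,j) \<in> T" by (auto simp: has_left_def)
  show "has_left (insert (k,k) (T - {(k,j0)})) (a,b)"
  proof (cases "(a,j) = (k,j0)")
    case True
    then have "k < b" using p row_k_left_of_k[of b] by fastforce
    then show ?thesis using True by (auto simp: has_left_insert_remove_iff)
  qed (use j in \<open>auto simp: has_left_insert_remove_iff\<close>)
qed

lemma exclusive_parent_shift_onto_diagonal: "exclusive_parent (insert (k,k) (T - {(k,j0)}))"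
  unfolding exclusive_parent_def
proof (intro ballI impI)
  fix p assume p: "p \<in> insert (k,k) (T - {(k,j0)})" "p \<noteq> (1,1)"
  obtain a b where [simp]: "p = (a,b)" by (cases p)
  consider "p = (k,k)" | "p \<in> T" "p \<noteq> (k,j0)" "p \<noteq> (k,k)" using p(1) by auto
  then show "has_above (insert (k,k) (T - {(k,j0)})) p \<noteq> has_left (insert (k,k) (T - {(k,j0)})) p"
  proof cases
    case 1
    then show ?thesis using col_k_early row_k_left_of_k i0 j0
      by (auto simp: has_above_insert_remove_iff has_left_insert_remove_iff)
  next
    case 2
    then show ?thesis
      using has_above_shift_onto_diagonal has_left_shift_onto_diagonal has_above_neq_has_left p(2)
      by simp
  qed
qed

lemma CNM_leaves_shift_onto_diagonal: "CNM_leaves n (insert (k,k) (T - {(k,j0)})) P"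
proof -
  obtain jk where "k < jk" "(k,jk) \<in> T" using leaf_beyond_k_in_row_k by blast
  then have "has_right T (k,j0)"
    using j0 by (auto simp: has_right_def intro!: exI[of _ jk])
  moreover have "has_right (T - {(k,j0)}) (k,k)" "has_below (T - {(k,j0)}) (k,k)"
    using leaf_beyond_k_in_row_k leaf_beyond_k_in_col_k j0 by (auto simp: has_right_def has_below_def)
  ultimately show ?thesis
    using exchange[OF row_k_early] exclusive_parent_shift_onto_diagonal k j0 by auto
qed

end

lemma another_CNM_if_row_k_starts_late:
  assumes "(k,j0) \<notin> T"
  shows "\<exists>T'. CNM_leaves n T' P \<and> T' \<noteq> T"
proof -
  have "\<exists>j. (k,j) \<in> T" using leaf_beyond_k_in_row_k by blast
  then obtain s where s: "(k,s) \<in> T" "\<And>j. j < s \<Longrightarrow> (k,j) \<notin> T"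
    by (auto simp: exists_least_iff[of "\<lambda>j. (k,j) \<in> T"])
  have "k \<le> s" using s(1) assms cols_confined[of k s] by fastforce
  then have "(i0,s) \<in> T" "CNM_leaves n (insert (k,j0) (T - {(i0,s)})) P"
    using above_first_of_row_k CNM_leaves_shift_into_row_k s by auto
  moreover have "(k,j0) \<noteq> (i0,s)" using i0 by simp
  ultimately show ?thesis using insert_remove_neq[of "(i0,s)" T "(k,j0)"] by blast
qed

lemma another_CNM: "\<exists>T'. CNM_leaves n T' P \<and> T' \<noteq> T"
proof (cases "(k,j0) \<in> T")
  case row_k_early: True
  show ?thesis
  proof (cases "(i0,k) \<in> T")
    case True
    then have "CNM_leaves n (insert (k,k) (T - {(k,j0)})) P"
      using CNM_leaves_shift_onto_diagonal row_k_early by blast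
    moreover have "(k,k) \<noteq> (k,j0)" using j0 by simp
    ultimately show ?thesis using insert_remove_neq[OF row_k_early] by blast
  next
    case False
    then obtain T' where "CNM_leaves n T' (P\<inverse>)" "T' \<noteq> T\<inverse>"
      using leafless_L_subset.another_CNM_if_row_k_starts_late[OF converse] by auto
    then have "CNM_leaves n (T'\<inverse>) P" "T'\<inverse> \<noteq> T"
      using CNM_leaves.converse by fastforce+
    then show ?thesis by blast
  qed
qed (rule another_CNM_if_row_k_starts_late)

end

context CNM_leaves
begin

lemma another_CNM_if_L_subset_fails:
  assumes n: "2 \<le> n" and k: "2 \<le> k" "k < n" and fail: "card (P \<inter> L_subset k) \<noteq> 1"
    and below_k: "\<And>m. 2 \<le> m \<Longrightarrow> m < k \<Longrightarrow> card (P \<inter> L_subset m) = 1"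
  shows "\<exists>T'. CNM_leaves n T' P \<and> T' \<noteq> T"
proof -
  interpret t: CNM_leaves n "T\<inverse>" "P\<inverse>" by (rule converse)
  have sq: "card (P \<inter> square (k-1)) = k - 2"
    using card_leaves_in_square[OF n, of "k-1"] below_k k by simp
  moreover have "P\<inverse> \<inter> square (k-1) = (P \<inter> square (k-1))\<inverse>"
    by (auto simp: square_def)
  ultimately have sq': "card (P\<inverse> \<inter> square (k-1)) = k - 2" by simp
  obtain i0 where i0: "1 \<le> i0" "i0 < k" "\<And>j. (i0,j) \<in> P \<Longrightarrow> k \<le> j"
    and rows: "\<And>i j. (i,j) \<in> T \<Longrightarrow> i < k \<Longrightarrow> i \<noteq> i0 \<Longrightarrow> j < k"
    using row_escaping_square[OF k(1) sq] by blast
  obtain j0 where j0: "1 \<le> j0" "j0 < k" "\<And>i. (j0,i) \<in> P\<inverse> \<Longrightarrow> k \<le> i"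
    and cols_conv: "\<And>j i. (j,i) \<in> T\<inverse> \<Longrightarrow> j < k \<Longrightarrow> j \<noteq> j0 \<Longrightarrow> i < k"
    using t.row_escaping_square[OF k(1) sq'] by blast
  have cols: "\<And>i j. (i,j) \<in> T \<Longrightarrow> j < k \<Longrightarrow> j \<noteq> j0 \<Longrightarrow> i < k"
    using cols_conv by simp
  obtain jk ik where jk: "(k,jk) \<in> P" and ik: "(ik,k) \<in> P"
    using leaf_in_row[of k] leaf_in_col[of k] k by auto
  have "k < jk \<and> k < ik"
    using leaves_of_row_and_col_k_beyond_k[OF k(2) fail i0(2) j0(2) rows cols jk ik] .
  then have row_k: "\<And>j. (k,j) \<in> P \<Longrightarrow> k < j" and col_k: "\<And>i. (i,k) \<in> P \<Longrightarrow> k < i"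
    using leaf_row_unique[OF jk] leaf_col_unique[OF ik] by auto
  have "leafless_L_subset n T P k i0 j0"
  proof (intro leafless_L_subset.intro leafless_L_subset_axioms.intro)
    show "k < j" if "(i0,j) \<in> P" for j
      using i0(3)[OF that] col_k[of i0] i0(2) that by (cases "j = k") auto
    show "k < i" if "(i,j0) \<in> P" for i
      using j0(3)[of i] row_k[of j0] j0(2) that by (cases "i = k") auto
    show "CNM_leaves n T P" by (fact CNM_leaves_axioms)
    show "2 \<le> k" "k \<le> n" "1 \<le> i0" "i0 < k" "1 \<le> j0" "j0 < k"
      using k i0(1,2) j0(1,2) by simp_all
  qed (fact rows cols row_k col_k)+
  then show ?thesis by (rule leafless_L_subset.another_CNM)
qed

end

theorem lemma3p3:
  fixes n :: nat and P :: "(nat \<times> nat) set"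
  assumes "n \<ge> 2"
    and "is_perm_matrix n P"
    and "\<exists>!T. is_CNM n T \<and> leaf_matrix T = P"
  shows "\<forall>k. 2 \<le> k \<and> k \<le> n - 1 \<longrightarrow> card (P \<inter> L_subset k) = 1"
proof (rule ccontr)
  define fails where "fails k \<longleftrightarrow> 2 \<le> k \<and> k < n \<and> card (P \<inter> L_subset k) \<noteq> 1" for k
  assume "\<not> ?thesis"
  then have "\<exists>k. fails k" using assms(1) by (auto simp: fails_def)
  then obtain k where k: "fails k" and least: "\<And>m. m < k \<Longrightarrow> \<not> fails m"
    by (auto simp: exists_least_iff[of fails])
  have below_k: "card (P \<inter> L_subset m) = 1" if "2 \<le> m" "m < k" for m
    using least[of m] that k by (auto simp: fails_def)
  obtain T where T: "is_CNM n T" "leaf_matrix T = P"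
    and unique: "\<And>T'. is_CNM n T' \<Longrightarrow> leaf_matrix T' = P \<Longrightarrow> T' = T"
    using assms(3) by blast
  interpret CNM_leaves n T P using T assms(2) by unfold_locales
  obtain T' where "CNM_leaves n T' P" "T' \<noteq> T"
    using another_CNM_if_L_subset_fails[OF assms(1) _ _ _ below_k] k by (auto simp: fails_def)
  then show False using unique CNM_leaves.CNM CNM_leaves.leaf_matrix by blast
qed

end
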